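(* For real $m,n\ge 2$, let $p_c(m,n)$ denote the unique fixed point in $(0,1)$ of $f_{m,n}(p)=1-(1-p^n)^m$. Then for $m,n\ge 2$, $\frac{\partial p_c}{\partial m}<0$ and $\frac{\partial p_c}{\partial n}>0$.
   Context: The paper asserts that for $m,n\ge 2$ the function $f_{m,n}(p)=1-(1-p^n)^m$ has exactly one fixed point in $(0,1)$. This fixed point is repelling, while $0$ and $1$ are attracting fixed points. For integers $m,n$, this fixed point is the critical bond-percolation probability of the diamond fractal $D(m,n)$. $D(m,n)$ is obtained by starting from a single edge and repeatedly replacing every edge by $m$ parallel disjoint paths of $n$ edges each. *)

theory Defs
  imports Complex_Main
begin

definition fmn :: "real \<Rightarrow> real \<Rightarrow> real \<Rightarrow> real" where
  "fmn m n p = 1 - (1 - p powr n) powr m"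

definition pc :: "real \<Rightarrow> real \<Rightarrow> real" where
  "pc m n = (THE p. 0 < p \<and> p < 1 \<and> fmn m n p = p)"

end

theory Submission
  imports Defs "HOL-Real_Asymp.Real_Asymp"
begin

text \<open>Solving the fixed-point equation \<open>(1 - p\<^sup>n)\<^sup>m = 1 - p\<close> for \<open>m\<close>, resp. for \<open>n\<close>,
  gives \<open>m = fixed_m n p\<close>, resp. \<open>n = fixed_n m p\<close>. The map \<open>fixed_m n\<close> is a decreasing
  bijection from \<open>(0,1)\<close> onto \<open>(1,\<infinity>)\<close> whose inverse is \<open>\<lambda>m. pc m n\<close>, and \<open>fixed_n m\<close> is
  increasing with inverse \<open>pc m\<close>; so \<open>pc\<close> is differentiable in either variable by the inverse
  function rule, with the stated signs. Both sign computations reduce to the fact that the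
  fixed point is repelling, \<open>f\<^sub>m\<^sub>,\<^sub>n'(p) > 1\<close>, which in turn is the monotonicity of
  \<open>x \<mapsto> (1-x) ln(1-x) / (x ln x)\<close> compared at \<open>p\<^sup>n < p\<close>.\<close>

lemma neg_ln_one_minus_mult_less:
  fixes x :: real assumes "0 < x" "x < 1"
  shows "(1 - x) * - ln (1 - x) < x"
proof -
  have "ln (1 + x / (1 - x)) < x / (1 - x)"
    using assms by (intro ln_add_one_self_less_self) auto
  moreover have "1 + x / (1 - x) = inverse (1 - x)"
    using assms by (simp add: field_simps)
  ultimately have "- ln (1 - x) < x / (1 - x)"
    using assms by (simp add: ln_inverse)
  then show ?thesis
    using assms by (simp add: field_simps)
qed

lemma ln_mult_ln_one_minus_less_entropy:
  fixes x :: real assumes "0 < x" "x < 1"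
  shows "ln x * ln (1 - x) < - x * ln x - (1 - x) * ln (1 - x)"
proof -
  define a b where "a = - ln x" and "b = - ln (1 - x)"
  have "a > 0" "b > 0"
    using assms by (auto simp: a_def b_def)
  moreover have "(1 - x) * b < x" "x * a < 1 - x"
    using neg_ln_one_minus_mult_less[of x] neg_ln_one_minus_mult_less[of "1 - x"] assms
    by (auto simp: a_def b_def)
  ultimately have "(1 - x) * b * a < x * a" "x * a * b < (1 - x) * b"
    by (auto intro: mult_strict_right_mono)
  then have "a * b < x * a + (1 - x) * b"
    by (simp add: algebra_simps)
  then show ?thesis
    by (simp add: a_def b_def algebra_simps)
qed

definition xlnx_ratio :: "real \<Rightarrow> real" where
  "xlnx_ratio x = ((1 - x) * ln (1 - x)) / (x * ln x)"

lemma xlnx_ratio_deriv_pos: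
  fixes x :: real assumes "0 < x" "x < 1"
  shows "\<exists>D. (xlnx_ratio has_real_derivative D) (at x) \<and> D > 0"
proof -
  let ?N = "(1 - x) * ln (1 - x)" and ?Q = "x * ln x"
  have "?Q \<noteq> 0"
    using assms by (simp add: ln_less_zero)
  then have "(xlnx_ratio has_real_derivative
      ((- ln (1 - x) - 1) * ?Q - ?N * (ln x + 1)) / (?Q * ?Q)) (at x)"
    unfolding xlnx_ratio_def[abs_def] using assms
    by (auto intro!: derivative_eq_intros simp: field_simps)
  moreover have "((- ln (1 - x) - 1) * ?Q - ?N * (ln x + 1)) / (?Q * ?Q) > 0"
  proof (rule divide_pos_pos)
    show "0 < (- ln (1 - x) - 1) * ?Q - ?N * (ln x + 1)"
      using ln_mult_ln_one_minus_less_entropy[OF assms] by (simp add: algebra_simps)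
    show "0 < ?Q * ?Q"
      using \<open>?Q \<noteq> 0\<close> not_real_square_gt_zero by blast
  qed
  ultimately show ?thesis
    by blast
qed

lemma xlnx_ratio_strict_mono:
  fixes x y :: real assumes "0 < x" "x < y" "y < 1"
  shows "xlnx_ratio x < xlnx_ratio y"
  by (rule DERIV_pos_imp_increasing[OF assms(2)]) (use xlnx_ratio_deriv_pos assms in auto)

definition fixed_m :: "real \<Rightarrow> real \<Rightarrow> real" where
  "fixed_m n p = ln (1 - p) / ln (1 - p powr n)"

definition fixed_n :: "real \<Rightarrow> real \<Rightarrow> real" where
  "fixed_n m p = ln (1 - (1 - p) powr (1 / m)) / ln p"

lemma powr_in_unit_interval:
  fixes p n :: real assumes "0 < p" "p < 1" "n > 0"
  shows "0 < p powr n" "p powr n < 1"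
  using assms powr_less_mono'[of p 0 n] by auto

lemma fmn_fixed_iff:
  fixes p n m :: real assumes p: "0 < p" "p < 1" and "n > 0"
  shows "fmn m n p = p \<longleftrightarrow> fixed_m n p = m"
proof -
  note a = powr_in_unit_interval[OF p \<open>n > 0\<close>]
  then have "ln (1 - p powr n) < 0"
    by simp
  have "fmn m n p = p \<longleftrightarrow> (1 - p powr n) powr m = 1 - p"
    by (auto simp: fmn_def)
  also have "\<dots> \<longleftrightarrow> ln ((1 - p powr n) powr m) = ln (1 - p)"
    using a p by (subst ln_inj_iff) auto
  also have "\<dots> \<longleftrightarrow> m * ln (1 - p powr n) = ln (1 - p)"
    using a by (simp add: ln_powr)
  also have "\<dots> \<longleftrightarrow> fixed_m n p = m"
    using \<open>ln (1 - p powr n) < 0\<close> by (auto simp: fixed_m_def field_simps)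
  finally show ?thesis .
qed

text \<open>With \<open>m = fixed_m n p\<close> this says \<open>f\<^sub>m\<^sub>,\<^sub>n'(p) = m n p\<^sup>n\<^sup>-\<^sup>1 (1-p\<^sup>n)\<^sup>m\<^sup>-\<^sup>1 > 1\<close>,
  because \<open>(1-p\<^sup>n)\<^sup>m\<^sup>-\<^sup>1 = (1-p)/(1-p\<^sup>n)\<close> at a fixed point. After multiplying out it is
  \<open>xlnx_ratio (p\<^sup>n) < xlnx_ratio p\<close>.\<close>
lemma fixed_point_repelling:
  fixes p n :: real assumes p: "0 < p" "p < 1" and "n > 1"
  shows "1 - p powr n < fixed_m n p * n * p powr (n - 1) * (1 - p)"
proof -
  define a L P where "a = p powr n" and "L = ln (1 - a)" and "P = ln p"
  have "0 < a" "a < p"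
    using powr_less_mono'[OF p \<open>n > 1\<close>] p by (auto simp: a_def)
  then have "L < 0" "P < 0" "ln a < 0"
    using p by (auto simp: L_def P_def)
  have "ln a = n * P"
    using p by (simp add: a_def P_def ln_powr)
  have "a * ln a < 0" "p * P < 0"
    using \<open>0 < a\<close> \<open>ln a < 0\<close> \<open>P < 0\<close> p by (auto simp: mult_pos_neg)
  have "xlnx_ratio a * ((a * ln a) * (p * P)) < xlnx_ratio p * ((a * ln a) * (p * P))"
    using xlnx_ratio_strict_mono[OF \<open>0 < a\<close> \<open>a < p\<close> p(2)] \<open>a * ln a < 0\<close> \<open>p * P < 0\<close>
    by (intro mult_strict_right_mono) (auto simp: mult_neg_neg)
  then have "(1 - a) * L * (p * P) < (1 - p) * ln (1 - p) * (a * ln a)"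
    using \<open>0 < a\<close> \<open>ln a < 0\<close> \<open>P < 0\<close> p by (simp add: xlnx_ratio_def L_def P_def)
  also have "\<dots> = fixed_m n p * n * p powr (n - 1) * (1 - p) * (L * P * p)"
    using p \<open>L < 0\<close> \<open>ln a = n * P\<close>
    by (simp add: fixed_m_def powr_diff field_simps flip: a_def L_def)
  finally show ?thesis
    using \<open>L < 0\<close> \<open>P < 0\<close> p by (simp add: a_def mult_neg_neg)
qed

lemma fixed_m_deriv_neg:
  fixes p n :: real assumes p: "0 < p" "p < 1" and "n > 1"
  shows "\<exists>D. (fixed_m n has_real_derivative D) (at p) \<and> D < 0"
proof -
  define a A B where "a = p powr n" and "A = ln (1 - p)" and "B = ln (1 - a)"
  have "0 < a" "a < 1"
    using powr_in_unit_interval[of p n] p \<open>n > 1\<close> by (auto simp: a_def)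
  then have "B < 0"
    by (simp add: B_def)
  have m_eq: "fixed_m n p = A / B"
    by (simp add: fixed_m_def A_def B_def a_def)
  define A' B' where "A' = - 1 / (1 - p)" and "B' = - (n * p powr (n - 1)) / (1 - a)"
  have "(fixed_m n has_real_derivative (A' * B - A * B') / (B * B)) (at p)"
    unfolding fixed_m_def[abs_def] using p \<open>0 < a\<close> \<open>a < 1\<close> \<open>B < 0\<close>
    by (auto intro!: derivative_eq_intros simp: A'_def B'_def A_def B_def a_def field_simps)
  moreover have "(A' * B - A * B') / (B * B) = (A' - fixed_m n p * B') / B"
    using \<open>B < 0\<close> by (simp add: m_eq field_simps)
  moreover have "A' - fixed_m n p * B' > 0"
  proof -
    have "1 / (1 - p) < fixed_m n p * n * p powr (n - 1) / (1 - a)"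
      using fixed_point_repelling[OF p \<open>n > 1\<close>] p \<open>a < 1\<close> by (simp add: a_def field_simps)
    then show ?thesis
      by (simp add: A'_def B'_def field_simps)
  qed
  ultimately show ?thesis
    using \<open>B < 0\<close> by (metis divide_pos_neg)
qed

lemma fixed_m_strict_antimono:
  fixes p q n :: real assumes "0 < p" "p < q" "q < 1" "n > 1"
  shows "fixed_m n q < fixed_m n p"
  by (rule DERIV_neg_imp_decreasing[OF assms(2)]) (use fixed_m_deriv_neg assms in auto)

lemma fixed_m_isCont:
  fixes p n :: real assumes "0 < p" "p < 1" "n > 1"
  shows "isCont (fixed_m n) p"
  using fixed_m_deriv_neg[OF assms] DERIV_isCont by blast

lemma ex_fixed_m_eq:
  fixes m n :: real assumes "n > 1" "m > 1"
  shows "\<exists>p. 0 < p \<and> p < 1 \<and> fixed_m n p = m"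
proof -
  have "filterlim (fixed_m n) at_top (at_right 0)"
    unfolding fixed_m_def[abs_def] using \<open>n > 1\<close> by real_asymp
  then have "eventually (\<lambda>p. m + 1 \<le> fixed_m n p \<and> p \<in> {0<..<1/2}) (at_right 0)"
    unfolding filterlim_at_top by (intro eventually_conj eventually_at_right_real) auto
  then obtain p1 where p1: "m + 1 \<le> fixed_m n p1" "p1 \<in> {0<..<1/2}"
    using eventually_happens' trivial_limit_at_right_real by blast
  have "(fixed_m n \<longlongrightarrow> 1) (at_left 1)"
    unfolding fixed_m_def[abs_def] using \<open>n > 1\<close> by real_asymp
  then have "eventually (\<lambda>p. fixed_m n p < m \<and> p \<in> {1/2<..<1}) (at_left 1)"
    using order_tendstoD(2) \<open>m > 1\<close> by (intro eventually_conj eventually_at_left_real) auto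
  then obtain p2 where p2: "fixed_m n p2 < m" "p2 \<in> {1/2<..<1}"
    using eventually_happens' trivial_limit_at_left_real by blast
  have "continuous_on {p1..p2} (fixed_m n)"
    using p1 p2 \<open>n > 1\<close> by (intro continuous_at_imp_continuous_on ballI fixed_m_isCont) auto
  then obtain p where "p1 \<le> p" "p \<le> p2" "fixed_m n p = m"
    using IVT2'[of "fixed_m n" p2 m p1] p1 p2 by auto
  then show ?thesis
    using p1 p2 by (intro exI[of _ p]) auto
qed

lemma pc_fixed_m:
  fixes p n :: real assumes "0 < p" "p < 1" "n > 1"
  shows "pc (fixed_m n p) n = p"
  unfolding pc_def
proof (rule the_equality)
  show "0 < p \<and> p < 1 \<and> fmn (fixed_m n p) n p = p"
    using assms fmn_fixed_iff by auto
next
  fix q assume q: "0 < q \<and> q < 1 \<and> fmn (fixed_m n p) n q = q"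
  then have "fixed_m n q = fixed_m n p"
    using assms fmn_fixed_iff[of q n] by auto
  then show "q = p"
    using q assms fixed_m_strict_antimono[of p q n] fixed_m_strict_antimono[of q p n]
    by (cases p q rule: linorder_cases) auto
qed

lemma pc_in_unit_interval_fixed_m:
  fixes m n :: real assumes "n > 1" "m > 1"
  shows "0 < pc m n \<and> pc m n < 1 \<and> fixed_m n (pc m n) = m"
  using ex_fixed_m_eq[OF assms] pc_fixed_m assms by force

lemma powr_fixed_n:
  fixes m p :: real assumes p: "0 < p" "p < 1" and "m > 0"
  shows "p powr fixed_n m p = 1 - (1 - p) powr (1 / m)"
proof -
  have "(1 - p) powr (1 / m) < (1 - p) powr 0"
    using p \<open>m > 0\<close> by (intro powr_less_mono') auto
  then have "0 < 1 - (1 - p) powr (1 / m)"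
    using p by simp
  moreover have "ln p \<noteq> 0"
    using p by simp
  ultimately show ?thesis
    using p by (simp add: powr_def fixed_n_def)
qed

lemma fixed_n_gt_1:
  fixes m p :: real assumes p: "0 < p" "p < 1" and "m > 1"
  shows "fixed_n m p > 1"
proof -
  have "(1 - p) powr 1 < (1 - p) powr (1 / m)"
    using p \<open>m > 1\<close> by (intro powr_less_mono') auto
  then have "p powr fixed_n m p < p powr 1"
    using powr_fixed_n[OF p] \<open>m > 1\<close> p by simp
  then show ?thesis
    using powr_mono'[of "fixed_n m p" 1 p] p by force
qed

lemma fixed_m_fixed_n:
  fixes m p :: real assumes p: "0 < p" "p < 1" and "m > 0"
  shows "fixed_m (fixed_n m p) p = m"
  using p \<open>m > 0\<close> by (simp add: fixed_m_def powr_fixed_n ln_powr)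

lemma fixed_n_fixed_m:
  fixes m n p :: real assumes p: "0 < p" "p < 1" and "n > 0" "m > 0" "fixed_m n p = m"
  shows "fixed_n m p = n"
proof -
  note a = powr_in_unit_interval[OF p \<open>n > 0\<close>]
  then have "ln (1 - p) = m * ln (1 - p powr n)"
    using \<open>fixed_m n p = m\<close> by (auto simp: fixed_m_def field_simps)
  then have "(1 - p) powr (1 / m) = 1 - p powr n"
    using p a \<open>m > 0\<close> by (simp add: powr_def)
  then show ?thesis
    using p by (simp add: fixed_n_def ln_powr)
qed

lemma pc_fixed_n:
  fixes m p :: real assumes "0 < p" "p < 1" "m > 1"
  shows "pc m (fixed_n m p) = p"
  using pc_fixed_m[OF assms(1,2) fixed_n_gt_1[OF assms]] fixed_m_fixed_n assms by simp

lemma fixed_n_deriv_pos: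
  fixes m p :: real assumes p: "0 < p" "p < 1" and "m > 1"
  shows "\<exists>D. (fixed_n m has_real_derivative D) (at p) \<and> D > 0"
proof -
  define n a L where "n = fixed_n m p" and "a = p powr n" and "L = ln p"
  have "n > 1" "fixed_m n p = m"
    using fixed_n_gt_1[OF p \<open>m > 1\<close>] fixed_m_fixed_n[OF p] \<open>m > 1\<close> by (auto simp: n_def)
  have "0 < a" "a < 1" "L < 0"
    using powr_in_unit_interval[of p n] p \<open>n > 1\<close> by (auto simp: a_def L_def)
  have c: "(1 - p) powr (1 / m) = 1 - a"
    using powr_fixed_n[OF p] \<open>m > 1\<close> by (simp add: a_def n_def)
  define C' where "C' = (1 / m) * (1 - p) powr (1 / m - 1) / a"
  have "(fixed_n m has_real_derivative (C' * L - ln a * (1 / p)) / (L * L)) (at p)"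
    unfolding fixed_n_def[abs_def] using p \<open>0 < a\<close> \<open>a < 1\<close> \<open>L < 0\<close>
    by (auto intro!: derivative_eq_intros simp: C'_def L_def c field_simps)
  moreover have "ln a = n * L"
    using p by (simp add: a_def L_def ln_powr)
  then have "(C' * L - ln a * (1 / p)) / (L * L) = (C' - n / p) / L"
    using \<open>L < 0\<close> by (simp add: field_simps)
  moreover have "C' < n / p"
  proof -
    have pw: "(1 - p) powr (1 / m - 1) = (1 - a) / (1 - p)"
      using p by (simp add: powr_diff c)
    have C': "C' = (1 - a) / (m * (1 - p) * a)"
      unfolding C'_def pw using \<open>m > 1\<close> p \<open>0 < a\<close> by (simp add: field_simps)
    have "(1 - a) * p < m * n * a * (1 - p)"
      using fixed_point_repelling[OF p \<open>n > 1\<close>] \<open>fixed_m n p = m\<close> p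
      by (simp add: a_def powr_diff field_simps)
    moreover have "m * (1 - p) * a > 0"
      using p \<open>m > 1\<close> \<open>0 < a\<close> by simp
    ultimately show ?thesis
      unfolding C' using p by (simp add: divide_simps mult.commute mult.left_commute)
  qed
  ultimately show ?thesis
    using \<open>L < 0\<close> by (metis diff_less_0_iff_less divide_neg_neg)
qed

lemma fixed_n_isCont:
  fixes p m :: real assumes "0 < p" "p < 1" "m > 1"
  shows "isCont (fixed_n m) p"
  using fixed_n_deriv_pos[OF assms] DERIV_isCont by blast

lemma DERIV_inverse_function_interval:
  fixes f g :: "real \<Rightarrow> real"
  assumes "a < x" "x < b" "c < f x" "f x < d"
    and left_inverse: "\<And>z. a < z \<Longrightarrow> z < b \<Longrightarrow> g (f z) = z"
    and right_inverse: "\<And>y. c < y \<Longrightarrow> y < d \<Longrightarrow> f (g y) = y"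
    and cont: "\<And>z. a < z \<Longrightarrow> z < b \<Longrightarrow> isCont f z"
    and deriv: "(f has_real_derivative D) (at x)" "D \<noteq> 0"
  shows "(g has_real_derivative inverse D) (at (f x))"
proof (rule DERIV_inverse_function[where f = f and g = g and a = c and b = d])
  show "isCont g (f x)"
  proof (rule isCont_inverse_function2[where f = f and g = g and x = x
        and a = "(a + x) / 2" and b = "(x + b) / 2"])
    fix z assume "(a + x) / 2 \<le> z" "z \<le> (x + b) / 2"
    then have "a < z" "z < b"
      using \<open>a < x\<close> \<open>x < b\<close> by auto
    then show "g (f z) = z" "isCont f z"
      by (simp_all add: left_inverse cont)
  qed (use \<open>a < x\<close> \<open>x < b\<close> in auto)
  show "(f has_real_derivative D) (at (g (f x)))"
    using deriv(1) left_inverse[OF \<open>a < x\<close> \<open>x < b\<close>] by simp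
qed (use assms in auto)

theorem proposition3p4:
  fixes m n :: real
  assumes "m \<ge> 2" and "n \<ge> 2"
  shows "(\<exists>D. ((\<lambda>x. pc x n) has_real_derivative D) (at m within {2..}) \<and> D < 0)
       \<and> (\<exists>D. ((\<lambda>y. pc m y) has_real_derivative D) (at n within {2..}) \<and> D > 0)"
proof
  have "m > 1" "n > 1"
    using assms by auto
  then have p: "0 < pc m n" "pc m n < 1" and m_eq: "fixed_m n (pc m n) = m"
    using pc_in_unit_interval_fixed_m by auto
  have n_eq: "fixed_n m (pc m n) = n"
    using fixed_n_fixed_m[OF p _ _ m_eq] \<open>m > 1\<close> \<open>n > 1\<close> by simp
  obtain D where D: "(fixed_m n has_real_derivative D) (at (pc m n))" "D < 0"
    using fixed_m_deriv_neg[OF p \<open>n > 1\<close>] by blast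
  have "((\<lambda>y. pc y n) has_real_derivative inverse D) (at (fixed_m n (pc m n)))"
  proof (rule DERIV_inverse_function_interval[where f = "fixed_m n" and g = "\<lambda>y. pc y n"
        and x = "pc m n" and a = 0 and b = 1 and c = 1 and d = "m + 1"])
    show "pc (fixed_m n z) n = z" "isCont (fixed_m n) z" if "0 < z" "z < 1" for z
      using pc_fixed_m fixed_m_isCont that \<open>n > 1\<close> by auto
    show "fixed_m n (pc y n) = y" if "1 < y" "y < m + 1" for y
      using pc_in_unit_interval_fixed_m[of n y] that \<open>n > 1\<close> by simp
  qed (use p m_eq D \<open>m > 1\<close> in auto)
  then show "\<exists>D. ((\<lambda>x. pc x n) has_real_derivative D) (at m within {2..}) \<and> D < 0"
    using D m_eq by (intro exI[of _ "inverse D"]) (auto intro: has_field_derivative_at_within)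
  obtain E where E: "(fixed_n m has_real_derivative E) (at (pc m n))" "E > 0"
    using fixed_n_deriv_pos[OF p \<open>m > 1\<close>] by blast
  have "(pc m has_real_derivative inverse E) (at (fixed_n m (pc m n)))"
  proof (rule DERIV_inverse_function_interval[where f = "fixed_n m" and g = "pc m"
        and x = "pc m n" and a = 0 and b = 1 and c = 1 and d = "n + 1"])
    show "pc m (fixed_n m z) = z" "isCont (fixed_n m) z" if "0 < z" "z < 1" for z
      using pc_fixed_n fixed_n_isCont that \<open>m > 1\<close> by auto
    show "fixed_n m (pc m y) = y" if "1 < y" "y < n + 1" for y
      using pc_in_unit_interval_fixed_m[of y m] fixed_n_fixed_m[of "pc m y" y m] that \<open>m > 1\<close>
      by simp
  qed (use p n_eq E \<open>n > 1\<close> in auto)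
  then show "\<exists>D. ((\<lambda>y. pc m y) has_real_derivative D) (at n within {2..}) \<and> D > 0"
    using E n_eq by (intro exI[of _ "inverse E"]) (auto intro: has_field_derivative_at_within)
qed

end
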